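(* Let $G$ be a finite $p$-group with $Z(G)$ cyclic, let $\alpha\in Z^2(G,\mathbb{C}^\times)$ and let $\rho$ be an irreducible $\alpha$-representation of $G$. Then $\rho$ is faithful if and only if, for any (equivalently, some) non-trivial subgroup $A\le Z(G)$, the restriction $\rho|_A$ is faithful, i.e. no $1\ne a\in A$ has $\rho(a)$ a scalar matrix.
   Context: An $\alpha$-representation is a map $\rho:G\to\mathrm{GL}(V)$ with $\rho(1)=1$ and $\rho(g)\rho(h)=\alpha(g,h)\rho(gh)$; it is faithful if the only $g\in G$ with $\rho(g)$ scalar is $g=1$. *)

theory Defs
  imports "HOL-Algebra.Elementary_Groups" "Jordan_Normal_Form.Matrix"
begin

definition group_center :: "('a, 'b) monoid_scheme \<Rightarrow> 'a set" where
  "group_center G = {z \<in> carrier G. \<forall>g \<in> carrier G. z \<otimes>\<^bsub>G\<^esub> g = g \<otimes>\<^bsub>G\<^esub> z}"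

definition p_group :: "nat \<Rightarrow> ('a, 'b) monoid_scheme \<Rightarrow> bool" where
  "p_group p G \<longleftrightarrow> group G \<and> prime p \<and> finite (carrier G) \<and> (\<exists>k. card (carrier G) = p ^ k)"

definition cocycle2 :: "('a, 'b) monoid_scheme \<Rightarrow> ('a \<Rightarrow> 'a \<Rightarrow> complex) \<Rightarrow> bool" where
  "cocycle2 G \<alpha> \<longleftrightarrow>
     (\<forall>g \<in> carrier G. \<forall>h \<in> carrier G. \<alpha> g h \<noteq> 0) \<and>
     (\<forall>g \<in> carrier G. \<forall>h \<in> carrier G. \<forall>k \<in> carrier G.
        \<alpha> g h * \<alpha> (g \<otimes>\<^bsub>G\<^esub> h) k = \<alpha> h k * \<alpha> g (h \<otimes>\<^bsub>G\<^esub> k))"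

definition alpha_rep ::
  "('a, 'b) monoid_scheme \<Rightarrow> ('a \<Rightarrow> 'a \<Rightarrow> complex) \<Rightarrow> nat \<Rightarrow> ('a \<Rightarrow> complex mat) \<Rightarrow> bool" where
  "alpha_rep G \<alpha> n \<rho> \<longleftrightarrow>
     (\<forall>g \<in> carrier G. \<rho> g \<in> carrier_mat n n) \<and>
     \<rho> \<one>\<^bsub>G\<^esub> = 1\<^sub>m n \<and>
     (\<forall>g \<in> carrier G. \<forall>h \<in> carrier G. \<rho> g * \<rho> h = \<alpha> g h \<cdot>\<^sub>m \<rho> (g \<otimes>\<^bsub>G\<^esub> h))"

definition vec_subspace :: "nat \<Rightarrow> complex vec set \<Rightarrow> bool" where
  "vec_subspace n W \<longleftrightarrow> W \<subseteq> carrier_vec n \<and> 0\<^sub>v n \<in> W \<and>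
     (\<forall>v \<in> W. \<forall>w \<in> W. v + w \<in> W) \<and> (\<forall>c. \<forall>v \<in> W. c \<cdot>\<^sub>v v \<in> W)"

definition irreducible_rep ::
  "('a, 'b) monoid_scheme \<Rightarrow> nat \<Rightarrow> ('a \<Rightarrow> complex mat) \<Rightarrow> bool" where
  "irreducible_rep G n \<rho> \<longleftrightarrow> n > 0 \<and>
     (\<forall>W. vec_subspace n W \<and> (\<forall>g \<in> carrier G. \<forall>w \<in> W. \<rho> g *\<^sub>v w \<in> W)
          \<longrightarrow> W = {0\<^sub>v n} \<or> W = carrier_vec n)"

definition scalar_mat :: "nat \<Rightarrow> complex mat \<Rightarrow> bool" where
  "scalar_mat n M \<longleftrightarrow> (\<exists>c. M = c \<cdot>\<^sub>m 1\<^sub>m n)"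

definition faithful_on ::
  "('a, 'b) monoid_scheme \<Rightarrow> 'a set \<Rightarrow> nat \<Rightarrow> ('a \<Rightarrow> complex mat) \<Rightarrow> bool" where
  "faithful_on G S n \<rho> \<longleftrightarrow> (\<forall>g \<in> S. scalar_mat n (\<rho> g) \<longrightarrow> g = \<one>\<^bsub>G\<^esub>)"

definition faithful_rep :: "('a, 'b) monoid_scheme \<Rightarrow> nat \<Rightarrow> ('a \<Rightarrow> complex mat) \<Rightarrow> bool" where
  "faithful_rep G n \<rho> \<longleftrightarrow> faithful_on G (carrier G) n \<rho>"

end

theory Submission
  imports Defs "HOL-Algebra.Multiplicative_Group" "HOL-Algebra.Group_Action"
    "HOL-Computational_Algebra.Primes"
begin

text \<open>The elements of \<open>G\<close> acting by scalars form the kernel \<open>K\<close> of the projective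
  representation; it is a normal subgroup, since conjugating a scalar matrix gives a scalar matrix
  and the cocycle only contributes nonzero factors. By the class equation, a nontrivial normal
  subgroup of a \<open>p\<close>-group meets the centre \<open>Z\<close> nontrivially, so \<open>\<rho>\<close> is faithful iff
  \<open>K \<inter> Z = 1\<close>, i.e. iff it is faithful on every nontrivial \<open>A \<le> Z\<close>. If \<open>Z\<close> is
  cyclic, every nontrivial subgroup of \<open>Z\<close> contains its unique subgroup of order \<open>p\<close>, so
  \<open>K \<inter> Z\<close> meets each such \<open>A\<close> nontrivially and faithfulness on a single \<open>A\<close> suffices.
  Irreducibility is only used to know that \<open>n > 0\<close>.\<close>

lemma prime_dvd_if_dvd_prime_power:
  fixes p a :: nat
  assumes "prime p" "a dvd p ^ k" "a \<noteq> 1"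
  shows "p dvd a"
proof -
  obtain i where "a = p ^ i" using divides_primepow_nat assms(1,2) by blast
  with assms(3) show ?thesis by (cases i) auto
qed

lemma p_group_card_subgroup_dvd:
  fixes G (structure)
  assumes "p_group p G" "subgroup N G" "N \<noteq> {\<one>}"
  shows "p dvd card N"
proof -
  interpret group G using assms(1) unfolding p_group_def by blast
  obtain k where k: "card (carrier G) = p ^ k" and p: "prime p"
    using assms(1) unfolding p_group_def by blast
  have "card N dvd p ^ k"
    using lagrange[OF assms(2)] k unfolding order_def by (metis dvd_triv_right)
  moreover have "card N \<noteq> 1"
    using assms(3) subgroup.one_closed[OF assms(2)] by (auto simp: card_1_singleton_iff)
  ultimately show ?thesis using prime_dvd_if_dvd_prime_power p by blast
qed

lemma (in group_action) p_group_card_non_fixed_points_dvd: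
  assumes "p_group p G" "F \<subseteq> E" "finite F"
    and invariant: "\<And>g x. g \<in> carrier G \<Longrightarrow> x \<in> F \<Longrightarrow> \<phi> g x \<in> F"
  shows "p dvd card {x \<in> F. \<exists>g \<in> carrier G. \<phi> g x \<noteq> x}"
proof -
  define M where "M = {x \<in> F. \<exists>g \<in> carrier G. \<phi> g x \<noteq> x}"
  have "M \<subseteq> E" using assms(2) unfolding M_def by blast
  have "finite M" using assms(3) unfolding M_def by simp
  obtain k where k: "order G = p ^ k" and p: "prime p"
    using assms(1) unfolding p_group_def order_def by blast
  have orbit_subset: "orbit G \<phi> x \<subseteq> M" if x: "x \<in> M" for x
  proof
    fix y assume y: "y \<in> orbit G \<phi> x"
    then obtain g where g: "g \<in> carrier G" "y = \<phi> g x" unfolding orbit_def by blast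
    have "x \<in> F" using x unfolding M_def by blast
    then have "y \<in> F" using g invariant by simp
    have "x \<in> orbit G \<phi> y"
      using orbit_sym[of x y] \<open>x \<in> F\<close> \<open>y \<in> F\<close> y assms(2) by blast
    then obtain h where h: "h \<in> carrier G" "x = \<phi> h y" unfolding orbit_def by blast
    show "y \<in> M"
    proof (rule ccontr)
      assume "y \<notin> M"
      then have "\<forall>g \<in> carrier G. \<phi> g y = y" using \<open>y \<in> F\<close> unfolding M_def by blast
      then have "x = y" using h by simp
      with \<open>y \<notin> M\<close> x show False by simp
    qed
  qed
  have orbit_dvd: "p dvd card (orbit G \<phi> x)" if x: "x \<in> M" for x
  proof -
    have "x \<in> E" using x \<open>M \<subseteq> E\<close> by blast
    then have "card (orbit G \<phi> x) dvd p ^ k"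
      using orbit_stabilizer_theorem[OF \<open>x \<in> E\<close>] k by (metis dvd_triv_left)
    moreover obtain g where "g \<in> carrier G" "\<phi> g x \<noteq> x" using x unfolding M_def by blast
    then have "{x, \<phi> g x} \<subseteq> orbit G \<phi> x"
      using orbit_refl[OF \<open>x \<in> E\<close>] unfolding orbit_def by blast
    then have "card (orbit G \<phi> x) \<noteq> 1"
      using \<open>\<phi> g x \<noteq> x\<close> by (metis card_1_singletonE insert_subset singletonD)
    ultimately show ?thesis using prime_dvd_if_dvd_prime_power p by blast
  qed
  have "\<Union> (orbit G \<phi> ` M) = M"
    using orbit_subset orbit_refl \<open>M \<subseteq> E\<close> by blast
  moreover have "pairwise disjnt (orbit G \<phi> ` M)"
  proof (rule pairwiseI)
    fix P Q assume "P \<in> orbit G \<phi> ` M" "Q \<in> orbit G \<phi> ` M" "P \<noteq> Q"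
    moreover have "orbit G \<phi> ` M \<subseteq> orbits G E \<phi>" using \<open>M \<subseteq> E\<close> unfolding orbits_def by blast
    ultimately show "disjnt P Q" using disjoint_union unfolding disjnt_def by blast
  qed
  moreover have "finite Q" if "Q \<in> orbit G \<phi> ` M" for Q
    using that orbit_subset \<open>finite M\<close> by (auto intro: finite_subset)
  ultimately have "card M = sum card (orbit G \<phi> ` M)"
    using card_Union_disjoint[of "orbit G \<phi> ` M"] by simp
  also have "p dvd \<dots>" using orbit_dvd by (intro dvd_sum) blast
  finally show ?thesis unfolding M_def .
qed

lemma group_center_subgroup:
  fixes G (structure)
  assumes "group G"
  shows "subgroup (group_center G) G"
proof -
  interpret group G by fact
  show ?thesis
  proof (rule subgroupI)
    show "group_center G \<subseteq> carrier G" "group_center G \<noteq> {}"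
      unfolding group_center_def by force+
  next
    fix a assume a: "a \<in> group_center G"
    then have "a \<in> carrier G" unfolding group_center_def by blast
    have "inv a \<otimes> g = g \<otimes> inv a" if "g \<in> carrier G" for g
    proof -
      have "inv (inv g \<otimes> a) = inv (a \<otimes> inv g)"
        using a that unfolding group_center_def by simp
      then show ?thesis using that \<open>a \<in> carrier G\<close> by (simp add: inv_mult_group)
    qed
    then show "inv a \<in> group_center G"
      using \<open>a \<in> carrier G\<close> unfolding group_center_def by simp
  next
    fix a b assume a: "a \<in> group_center G" and b: "b \<in> group_center G"
    then have ab: "a \<in> carrier G" "b \<in> carrier G" unfolding group_center_def by auto
    have "a \<otimes> b \<otimes> g = g \<otimes> (a \<otimes> b)" if "g \<in> carrier G" for g
    proof -
      have "a \<otimes> b \<otimes> g = a \<otimes> (g \<otimes> b)" using ab b that unfolding group_center_def by (simp add: m_assoc)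
      also have "\<dots> = g \<otimes> a \<otimes> b" using ab a that unfolding group_center_def by (simp flip: m_assoc)
      finally show ?thesis using ab that by (simp add: m_assoc)
    qed
    then show "a \<otimes> b \<in> group_center G" using ab unfolding group_center_def by simp
  qed
qed

lemma (in group) conjugation_fixed_iff_center:
  assumes "x \<in> carrier G"
  shows "(\<forall>g \<in> carrier G. g \<otimes> x \<otimes> inv g = x) \<longleftrightarrow> x \<in> group_center G"
proof -
  have "g \<otimes> x \<otimes> inv g = x \<longleftrightarrow> x \<otimes> g = g \<otimes> x" if "g \<in> carrier G" for g
    using inv_solve_right'[of x "g \<otimes> x" g] that assms by auto
  then show ?thesis using assms unfolding group_center_def by auto
qed

lemma p_group_normal_subgroup_meets_center:
  fixes G (structure)
  assumes "p_group p G" "N \<lhd> G" "N \<noteq> {\<one>}"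
  shows "N \<inter> group_center G \<noteq> {\<one>}"
proof -
  interpret group G using assms(1) unfolding p_group_def by blast
  interpret conj: group_action G "carrier G" "\<lambda>g. \<lambda>h \<in> carrier G. g \<otimes> h \<otimes> inv g"
    by (rule action_by_conjugation)
  have N: "subgroup N G" "\<And>g h. g \<in> carrier G \<Longrightarrow> h \<in> N \<Longrightarrow> g \<otimes> h \<otimes> inv g \<in> N"
    using assms(2) normal_inv_iff by blast+
  have "finite (carrier G)" "prime p" using assms(1) unfolding p_group_def by blast+
  then have "finite N" using N(1) subgroup.subset finite_subset by blast
  have NG: "N \<subseteq> carrier G" using N(1) subgroup.subset by blast
  have "N - group_center G = {x \<in> N. \<exists>g \<in> carrier G. g \<otimes> x \<otimes> inv g \<noteq> x}"
    using conjugation_fixed_iff_center NG by blast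
  also have "\<dots> = {x \<in> N. \<exists>g \<in> carrier G. (\<lambda>h \<in> carrier G. g \<otimes> h \<otimes> inv g) x \<noteq> x}"
    using NG by auto
  finally have "p dvd card (N - group_center G)"
    using conj.p_group_card_non_fixed_points_dvd[OF assms(1) NG \<open>finite N\<close>] N(2) NG
    by (simp add: subset_iff)
  moreover have "card N = card (N \<inter> group_center G) + card (N - group_center G)"
    using \<open>finite N\<close> by (rule card_Int_Diff)
  ultimately have "p dvd card (N \<inter> group_center G)"
    using p_group_card_subgroup_dvd[OF assms(1) N(1) assms(3)] by (metis dvd_add_left_iff)
  then have "card (N \<inter> group_center G) \<noteq> 1"
    using \<open>prime p\<close> not_prime_1 by auto
  then show ?thesis by auto
qed

lemma (in group) pow_prime_power_pred_in_powers:
  assumes "x \<in> carrier G" "prime p" "ord x = p ^ m" "x [^] (i :: int) \<noteq> \<one>"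
  shows "x [^] (p ^ (m - 1)) \<noteq> \<one>" "\<exists>s :: int. (x [^] i) [^] s = x [^] (p ^ (m - 1))"
proof -
  have not_dvd: "\<not> int (p ^ m) dvd i" using assms(1,3,4) int_pow_eq_id by simp
  then have "m \<noteq> 0" by (cases m) auto
  have "\<not> p ^ m dvd p ^ (m - 1)"
    using \<open>m \<noteq> 0\<close> prime_gt_1_nat[OF assms(2)] by (simp add: dvd_power_iff_le)
  then show "x [^] (p ^ (m - 1)) \<noteq> \<one>" using assms(1,3) pow_eq_id by simp
  \<comment> \<open>\<open>d\<close> is a proper divisor of \<open>p ^ m\<close>, hence divides \<open>p ^ (m - 1)\<close>, and by Bezout it is
    a multiple of \<open>i\<close> modulo \<open>p ^ m = ord x\<close>.\<close>
  define d where "d = gcd i (int (p ^ m))"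
  have "nat d dvd p ^ m" unfolding d_def by (metis gcd_dvd2 gcd_ge_0_int nat_dvd_iff)
  then obtain a where a: "a \<le> m" "nat d = p ^ a" using divides_primepow_nat assms(2) by blast
  have "a \<noteq> m" using not_dvd a(2) unfolding d_def by (metis gcd_dvd1 gcd_ge_0_int int_nat_eq)
  then have "p ^ a dvd p ^ (m - 1)" using a(1) by (simp add: le_imp_power_dvd)
  then obtain q where q: "int (p ^ (m - 1)) = d * q"
    using a(2) unfolding d_def by (metis gcd_ge_0_int int_dvd_int_iff int_nat_eq dvdE)
  obtain s t where st: "s * i + t * int (p ^ m) = d" using bezout_int unfolding d_def by blast
  have "int (ord x) dvd int (p ^ (m - 1)) - i * (s * q)"
    using assms(3) unfolding q st[symmetric] by (simp add: algebra_simps)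
  then have "x [^] (i * (s * q)) = x [^] int (p ^ (m - 1))" using int_pow_eq assms(1) by blast
  then have "(x [^] i) [^] (s * q) = x [^] (p ^ (m - 1))"
    using int_pow_pow[OF assms(1), of i "s * q"] int_pow_int[of G x "p ^ (m - 1)"] by simp
  then show "\<exists>s :: int. (x [^] i) [^] s = x [^] (p ^ (m - 1))" by blast
qed

lemma p_group_cyclic_subgroup_nontrivial_inter:
  fixes G (structure)
  assumes "p_group p G" "subgroup Z G" "cyclic_group (subgroup_generated G Z)"
    and A: "subgroup A G" "A \<subseteq> Z" "A \<noteq> {\<one>}"
    and B: "subgroup B G" "B \<subseteq> Z" "B \<noteq> {\<one>}"
  shows "A \<inter> B \<noteq> {\<one>}"
proof -
  interpret group G using assms(1) unfolding p_group_def by blast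
  interpret Z: group "subgroup_generated G Z" by simp
  have carrier_Z: "carrier (subgroup_generated G Z) = Z"
    using assms(2) subgroup.carrier_subgroup_generated_subgroup by blast
  obtain w where w: "w \<in> Z" "Z = range (\<lambda>i :: int. w [^]\<^bsub>subgroup_generated G Z\<^esub> i)"
    using Z.cyclic_group assms(3) carrier_Z by auto
  then have "w \<in> carrier G" using assms(2) subgroup.subset by blast
  have Z_powers: "Z = range (\<lambda>i :: int. w [^] i)"
    using w int_pow_subgroup_generated[of w Z] carrier_Z by auto
  obtain k where "card (carrier G) = p ^ k" and p: "prime p"
    using assms(1) unfolding p_group_def by blast
  then have "ord w dvd p ^ k" using ord_dvd_group_order[OF \<open>w \<in> carrier G\<close>] unfolding order_def by simp
  then obtain m where m: "ord w = p ^ m" using divides_primepow_nat p by blast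
  have bottom: "w [^] (p ^ (m - 1)) \<in> C \<and> w [^] (p ^ (m - 1)) \<noteq> \<one>"
    if C: "subgroup C G" "C \<subseteq> Z" "C \<noteq> {\<one>}" for C
  proof -
    obtain c where c: "c \<in> C" "c \<noteq> \<one>" using C(3) subgroup.one_closed[OF C(1)] by blast
    then have "c \<in> range (\<lambda>i :: int. w [^] i)" using C(2) Z_powers by auto
    then obtain i :: int where i: "c = w [^] i" by blast
    then have "w [^] i \<noteq> \<one>" using c(2) by simp
    note bottom_pow = pow_prime_power_pred_in_powers[OF \<open>w \<in> carrier G\<close> p m this]
    then obtain s :: int where "c [^] s = w [^] (p ^ (m - 1))" unfolding i by blast
    then show ?thesis using subgroup_int_pow_closed[OF C(1) c(1), of s] bottom_pow(1) by simp
  qed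
  show ?thesis using bottom[OF A] bottom[OF B] by blast
qed

definition scalar_kernel :: "('a, 'b) monoid_scheme \<Rightarrow> nat \<Rightarrow> ('a \<Rightarrow> complex mat) \<Rightarrow> 'a set" where
  "scalar_kernel G n \<rho> = {g \<in> carrier G. scalar_mat n (\<rho> g)}"

lemma faithful_on_iff_scalar_kernel:
  fixes G (structure)
  assumes "A \<subseteq> carrier G"
  shows "faithful_on G A n \<rho> \<longleftrightarrow> A \<inter> scalar_kernel G n \<rho> \<subseteq> {\<one>}"
  using assms unfolding faithful_on_def scalar_kernel_def by blast

lemma one_smult_mat: "(1 :: 'a :: monoid_mult) \<cdot>\<^sub>m A = A"
  by (rule eq_matI) auto

lemma smult_smult_mat: "a \<cdot>\<^sub>m (b \<cdot>\<^sub>m A) = (a * b :: 'a :: semigroup_mult) \<cdot>\<^sub>m A"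
  by (rule eq_matI) (auto simp: mult.assoc)

lemma mult_smult_one_mat:
  "A \<in> carrier_mat n n \<Longrightarrow> A * (c \<cdot>\<^sub>m 1\<^sub>m n) = (c :: 'a :: comm_semiring_1) \<cdot>\<^sub>m A"
  using mult_smult_distrib[of A n n "1\<^sub>m n" n c] by simp

lemma scalar_mat_one: "scalar_mat n (1\<^sub>m n)"
  unfolding scalar_mat_def using one_smult_mat by metis

lemma scalar_mat_smult: "scalar_mat n M \<Longrightarrow> scalar_mat n (c \<cdot>\<^sub>m M)"
  unfolding scalar_mat_def by (metis smult_smult_mat)

lemma scalar_mat_smult_iff:
  assumes "c \<noteq> 0"
  shows "scalar_mat n (c \<cdot>\<^sub>m M) \<longleftrightarrow> scalar_mat n M"
proof
  assume "scalar_mat n (c \<cdot>\<^sub>m M)"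
  then obtain d where d: "c \<cdot>\<^sub>m M = d \<cdot>\<^sub>m 1\<^sub>m n" unfolding scalar_mat_def by blast
  have "M = (1 / c) \<cdot>\<^sub>m (c \<cdot>\<^sub>m M)" using assms by (simp add: smult_smult_mat one_smult_mat)
  also have "\<dots> = (d / c) \<cdot>\<^sub>m 1\<^sub>m n" unfolding d by (simp add: smult_smult_mat)
  finally show "scalar_mat n M" unfolding scalar_mat_def by blast
qed (rule scalar_mat_smult)

lemma scalar_mat_mult:
  assumes "scalar_mat n A" "scalar_mat n B"
  shows "scalar_mat n (A * B)"
proof -
  obtain a b where "A = a \<cdot>\<^sub>m 1\<^sub>m n" "B = b \<cdot>\<^sub>m 1\<^sub>m n"
    using assms unfolding scalar_mat_def by blast
  then have "A * B = (a * b) \<cdot>\<^sub>m 1\<^sub>m n"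
    using mult_smult_assoc_mat[of "1\<^sub>m n" n n "b \<cdot>\<^sub>m 1\<^sub>m n" n a] by (simp add: smult_smult_mat)
  then show ?thesis unfolding scalar_mat_def by blast
qed

locale alpha_representation = group G for G :: "('a, 'b) monoid_scheme" (structure) +
  fixes \<alpha> :: "'a \<Rightarrow> 'a \<Rightarrow> complex" and n :: nat and \<rho> :: "'a \<Rightarrow> complex mat"
  assumes cocycle: "cocycle2 G \<alpha>" and rep: "alpha_rep G \<alpha> n \<rho>"
begin

lemma cocycle_nonzero: "g \<in> carrier G \<Longrightarrow> h \<in> carrier G \<Longrightarrow> \<alpha> g h \<noteq> 0"
  using cocycle unfolding cocycle2_def by blast

lemma rep_carrier: "g \<in> carrier G \<Longrightarrow> \<rho> g \<in> carrier_mat n n"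
  using rep unfolding alpha_rep_def by blast

lemma rep_one: "\<rho> \<one> = 1\<^sub>m n"
  using rep unfolding alpha_rep_def by blast

lemma rep_mult: "g \<in> carrier G \<Longrightarrow> h \<in> carrier G \<Longrightarrow> \<rho> g * \<rho> h = \<alpha> g h \<cdot>\<^sub>m \<rho> (g \<otimes> h)"
  using rep unfolding alpha_rep_def by blast

lemma scalar_mult_iff:
  "g \<in> carrier G \<Longrightarrow> h \<in> carrier G \<Longrightarrow> scalar_mat n (\<rho> g * \<rho> h) \<longleftrightarrow> scalar_mat n (\<rho> (g \<otimes> h))"
  by (simp add: rep_mult cocycle_nonzero scalar_mat_smult_iff)

lemma scalar_inv:
  assumes "n > 0" "g \<in> carrier G" "scalar_mat n (\<rho> g)"
  shows "scalar_mat n (\<rho> (inv g))"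
proof -
  obtain c where c: "\<rho> g = c \<cdot>\<^sub>m 1\<^sub>m n" using assms(3) unfolding scalar_mat_def by blast
  have "c \<cdot>\<^sub>m \<rho> (inv g) = \<rho> (inv g) * \<rho> g"
    using c mult_smult_one_mat[OF rep_carrier[of "inv g"]] assms(2) by simp
  also have "\<dots> = \<alpha> (inv g) g \<cdot>\<^sub>m 1\<^sub>m n" using assms(2) rep_mult rep_one by simp
  finally have eq: "c \<cdot>\<^sub>m \<rho> (inv g) = \<alpha> (inv g) g \<cdot>\<^sub>m 1\<^sub>m n" .
  have "c \<noteq> 0"
  proof
    assume "c = 0"
    then have "(c \<cdot>\<^sub>m \<rho> (inv g)) $$ (0, 0) = 0" using rep_carrier[of "inv g"] assms(1,2) by simp
    then show False using eq cocycle_nonzero assms(1,2) by simp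
  qed
  moreover have "scalar_mat n (c \<cdot>\<^sub>m \<rho> (inv g))" using eq unfolding scalar_mat_def by blast
  ultimately show ?thesis using scalar_mat_smult_iff by blast
qed

lemma scalar_conj:
  assumes "h \<in> carrier G" "x \<in> carrier G" "scalar_mat n (\<rho> x)"
  shows "scalar_mat n (\<rho> (h \<otimes> x \<otimes> inv h))"
proof -
  obtain c where c: "\<rho> x = c \<cdot>\<^sub>m 1\<^sub>m n" using assms(3) unfolding scalar_mat_def by blast
  have "\<rho> h * \<rho> x * \<rho> (inv h) = c \<cdot>\<^sub>m (\<rho> h * \<rho> (inv h))"
    using c mult_smult_one_mat[OF rep_carrier[OF assms(1)]]
      mult_smult_assoc_mat[OF rep_carrier[OF assms(1)] rep_carrier[of "inv h"]] assms(1) by simp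
  moreover have "scalar_mat n (\<rho> h * \<rho> (inv h))"
    using scalar_mult_iff[of h "inv h"] assms(1) rep_one scalar_mat_one by simp
  ultimately have "scalar_mat n (\<rho> h * \<rho> x * \<rho> (inv h))"
    using scalar_mat_smult by simp
  moreover have "\<rho> h * \<rho> x * \<rho> (inv h) = \<alpha> h x \<cdot>\<^sub>m (\<rho> (h \<otimes> x) * \<rho> (inv h))"
    using rep_mult[OF assms(1,2)] mult_smult_assoc_mat[OF rep_carrier rep_carrier[of "inv h"]] assms(1,2)
    by simp
  ultimately have "scalar_mat n (\<rho> (h \<otimes> x) * \<rho> (inv h))"
    using scalar_mat_smult_iff[OF cocycle_nonzero[OF assms(1,2)]] by simp
  then show ?thesis using scalar_mult_iff assms(1,2) by simp
qed

lemma scalar_kernel_normal: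
  assumes "n > 0"
  shows "scalar_kernel G n \<rho> \<lhd> G"
proof -
  have "subgroup (scalar_kernel G n \<rho>) G"
  proof (rule subgroupI)
    show "scalar_kernel G n \<rho> \<subseteq> carrier G" "scalar_kernel G n \<rho> \<noteq> {}"
      using rep_one scalar_mat_one unfolding scalar_kernel_def by force+
  next
    fix g assume "g \<in> scalar_kernel G n \<rho>"
    then show "inv g \<in> scalar_kernel G n \<rho>"
      using scalar_inv[OF assms] unfolding scalar_kernel_def by simp
  next
    fix g h assume "g \<in> scalar_kernel G n \<rho>" "h \<in> scalar_kernel G n \<rho>"
    then have "g \<in> carrier G" "h \<in> carrier G" "scalar_mat n (\<rho> g * \<rho> h)"
      using scalar_mat_mult unfolding scalar_kernel_def by auto
    then show "g \<otimes> h \<in> scalar_kernel G n \<rho>" using scalar_mult_iff unfolding scalar_kernel_def by simp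
  qed
  then show ?thesis using scalar_conj normal_inv_iff unfolding scalar_kernel_def by simp
qed

end

lemma scalar_kernel_center_subgroup:
  assumes "group G" "cocycle2 G \<alpha>" "alpha_rep G \<alpha> n \<rho>" "n > 0"
  shows "subgroup (scalar_kernel G n \<rho> \<inter> group_center G) G"
proof -
  interpret alpha_representation G \<alpha> n \<rho>
    using assms(1-3) by (simp add: alpha_representation_def alpha_representation_axioms_def)
  show ?thesis
    using scalar_kernel_normal[OF assms(4)] group_center_subgroup[OF assms(1)]
    by (simp add: normal_def subgroups_Inter_pair)
qed

lemma faithful_on_central_iff:
  fixes G (structure)
  assumes "A \<subseteq> group_center G"
  shows "faithful_on G A n \<rho> \<longleftrightarrow> A \<inter> (scalar_kernel G n \<rho> \<inter> group_center G) \<subseteq> {\<one>}"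
proof -
  have "A \<subseteq> carrier G" using assms unfolding group_center_def by blast
  then show ?thesis using faithful_on_iff_scalar_kernel assms by blast
qed

lemma faithful_rep_iff_scalar_kernel_center:
  fixes G (structure)
  assumes "p_group p G" "cocycle2 G \<alpha>" "alpha_rep G \<alpha> n \<rho>" "n > 0"
  shows "faithful_rep G n \<rho> \<longleftrightarrow> scalar_kernel G n \<rho> \<inter> group_center G \<subseteq> {\<one>}"
proof -
  let ?K = "scalar_kernel G n \<rho>"
  have "group G" using assms(1) unfolding p_group_def by blast
  interpret alpha_representation G \<alpha> n \<rho>
    using \<open>group G\<close> assms(2,3) by (simp add: alpha_representation_def alpha_representation_axioms_def)
  have "?K \<lhd> G" using scalar_kernel_normal[OF assms(4)] .
  then have "\<one> \<in> ?K" using normal_imp_subgroup subgroup.one_closed by blast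
  have "faithful_rep G n \<rho> \<longleftrightarrow> ?K \<subseteq> {\<one>}"
    unfolding faithful_rep_def faithful_on_iff_scalar_kernel[OF subset_refl]
    by (simp add: scalar_kernel_def Int_absorb1)
  also have "\<dots> \<longleftrightarrow> ?K = {\<one>}" using \<open>\<one> \<in> ?K\<close> by blast
  also have "\<dots> \<longleftrightarrow> ?K \<inter> group_center G \<subseteq> {\<one>}"
  proof
    assume "?K \<inter> group_center G \<subseteq> {\<one>}"
    moreover have "\<one> \<in> group_center G"
      using subgroup.one_closed[OF group_center_subgroup[OF \<open>group G\<close>]] .
    ultimately have "?K \<inter> group_center G = {\<one>}" using \<open>\<one> \<in> ?K\<close> by blast
    then show "?K = {\<one>}"
      using p_group_normal_subgroup_meets_center[OF assms(1) \<open>?K \<lhd> G\<close>] by blast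
  qed blast
  finally show ?thesis .
qed

lemma faithful_rep_iff_faithful_on_central_subgroups:
  fixes G (structure)
  assumes "p_group p G" "cocycle2 G \<alpha>" "alpha_rep G \<alpha> n \<rho>" "n > 0"
  shows "faithful_rep G n \<rho> \<longleftrightarrow>
    (\<forall>A. subgroup A G \<and> A \<subseteq> group_center G \<and> A \<noteq> {\<one>} \<longrightarrow> faithful_on G A n \<rho>)"
proof -
  define L where "L = scalar_kernel G n \<rho> \<inter> group_center G"
  have L: "subgroup L G" "L \<subseteq> group_center G"
    using scalar_kernel_center_subgroup assms unfolding L_def p_group_def by auto
  have faithful: "faithful_rep G n \<rho> \<longleftrightarrow> L \<subseteq> {\<one>}"
    using faithful_rep_iff_scalar_kernel_center[OF assms] unfolding L_def .
  show ?thesis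
  proof
    assume "faithful_rep G n \<rho>"
    then show "\<forall>A. subgroup A G \<and> A \<subseteq> group_center G \<and> A \<noteq> {\<one>} \<longrightarrow> faithful_on G A n \<rho>"
      using faithful faithful_on_central_iff unfolding L_def by blast
  next
    assume all: "\<forall>A. subgroup A G \<and> A \<subseteq> group_center G \<and> A \<noteq> {\<one>} \<longrightarrow> faithful_on G A n \<rho>"
    show "faithful_rep G n \<rho>"
    proof (cases "L = {\<one>}")
      case False
      then have "faithful_on G L n \<rho>" using all L by blast
      then show ?thesis using faithful faithful_on_central_iff[OF L(2)] unfolding L_def by blast
    qed (simp add: faithful)
  qed
qed

lemma faithful_rep_iff_faithful_on_some_central_subgroup:
  fixes G (structure)
  assumes "p_group p G" "cocycle2 G \<alpha>" "alpha_rep G \<alpha> n \<rho>" "n > 0"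
    and "cyclic_group (subgroup_generated G (group_center G))" "carrier G \<noteq> {\<one>}"
  shows "faithful_rep G n \<rho> \<longleftrightarrow>
    (\<exists>A. subgroup A G \<and> A \<subseteq> group_center G \<and> A \<noteq> {\<one>} \<and> faithful_on G A n \<rho>)"
proof -
  have "group G" using assms(1) unfolding p_group_def by blast
  define Z L where "Z = group_center G" and "L = scalar_kernel G n \<rho> \<inter> group_center G"
  have Z: "subgroup Z G" using group_center_subgroup[OF \<open>group G\<close>] unfolding Z_def .
  have L: "subgroup L G" "L \<subseteq> Z"
    using scalar_kernel_center_subgroup[OF \<open>group G\<close> assms(2-4)] unfolding L_def Z_def by auto
  have faithful: "faithful_rep G n \<rho> \<longleftrightarrow> L \<subseteq> {\<one>}"
    using faithful_rep_iff_scalar_kernel_center[OF assms(1-4)] unfolding L_def .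
  show ?thesis
  proof
    have "Z \<noteq> {\<one>}"
      using p_group_normal_subgroup_meets_center[OF assms(1) group.normal_self[OF \<open>group G\<close>] assms(6)]
        subgroup.subset[OF Z] unfolding Z_def by (simp add: Int_absorb1)
    moreover assume "faithful_rep G n \<rho>"
    ultimately show "\<exists>A. subgroup A G \<and> A \<subseteq> group_center G \<and> A \<noteq> {\<one>} \<and> faithful_on G A n \<rho>"
      using Z faithful faithful_on_central_iff[of Z] unfolding Z_def L_def by blast
  next
    assume "\<exists>A. subgroup A G \<and> A \<subseteq> group_center G \<and> A \<noteq> {\<one>} \<and> faithful_on G A n \<rho>"
    then obtain A where A: "subgroup A G" "A \<subseteq> Z" "A \<noteq> {\<one>}" "A \<inter> L \<subseteq> {\<one>}"
      using faithful_on_central_iff unfolding Z_def L_def by blast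
    show "faithful_rep G n \<rho>"
    proof (cases "L = {\<one>}")
      case False
      then have "A \<inter> L \<noteq> {\<one>}"
        using p_group_cyclic_subgroup_nontrivial_inter[OF assms(1) Z assms(5)[folded Z_def] A(1-3) L]
        by blast
      moreover have "\<one> \<in> A \<inter> L" using A(1) L(1) subgroup.one_closed by blast
      ultimately show ?thesis using A(4) by blast
    qed (simp add: faithful)
  qed
qed

theorem corollary2p8:
  fixes G :: "('a, 'b) monoid_scheme" and p n :: nat
    and \<alpha> :: "'a \<Rightarrow> 'a \<Rightarrow> complex" and \<rho> :: "'a \<Rightarrow> complex mat"
  assumes "p_group p G"
    and "cyclic_group (subgroup_generated G (group_center G))"
    and "cocycle2 G \<alpha>"
    and "alpha_rep G \<alpha> n \<rho>"
    and "irreducible_rep G n \<rho>"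
  shows "(faithful_rep G n \<rho> \<longleftrightarrow>
           (\<forall>A. subgroup A G \<and> A \<subseteq> group_center G \<and> A \<noteq> {\<one>\<^bsub>G\<^esub>} \<longrightarrow> faithful_on G A n \<rho>))
       \<and> (carrier G \<noteq> {\<one>\<^bsub>G\<^esub>} \<longrightarrow>
           (faithful_rep G n \<rho> \<longleftrightarrow>
             (\<exists>A. subgroup A G \<and> A \<subseteq> group_center G \<and> A \<noteq> {\<one>\<^bsub>G\<^esub>} \<and> faithful_on G A n \<rho>)))"
proof -
  have "n > 0" using assms(5) unfolding irreducible_rep_def by blast
  then show ?thesis
    using faithful_rep_iff_faithful_on_central_subgroups[OF assms(1,3,4)]
      faithful_rep_iff_faithful_on_some_central_subgroup[OF assms(1,3,4) _ assms(2)]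
    by blast
qed

end
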